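(* In the setting below, every holomorphic function $f:\mathbb H\times\mathbb C^n\to\mathbb C$ which is invariant under $H_M$ (i.e. $f\circ g=f$ for all $g\in H_M$) is constant.
   Context: Let $n\ge 1$ and let $M=(m_{ij})\in SL(2n+1,\mathbb Z)$. Assume that $M$ has exactly one real eigenvalue $\alpha$, that $\alpha>0$, $\alpha\neq 1$, that $\alpha$ is a simple eigenvalue, and that the remaining eigenvalues are $\beta_1,\dots,\beta_k,\bar\beta_1,\dots,\bar\beta_k$ with $\mathrm{Im}\,\beta_j>0$. Let $W\subset\mathbb C^{2n+1}$ be the direct sum of the generalized eigenspaces of $M$ for $\beta_1,\dots,\beta_k$ (so $\dim_{\mathbb C}W=n$). Fix a real eigenvector $a=(a^{(1)},\dots,a^{(2n+1)})^\top\in\mathbb R^{2n+1}$ of $M$ for $\alpha$ and a basis $b_1,\dots,b_n$ of $W$, $b_j=(b_j^{(1)},\dots,b_j^{(2n+1)})^\top$. For $i=1,\dots,2n+1$ put $u_i=(a^{(i)},b_1^{(i)},\dots,b_n^{(i)})^\top\in\mathbb R\times\mathbb C^n$. Let $\mathbb H=\{w\in\mathbb C:\mathrm{Im}\,w>0\}$, define $g_i(w,z)=(w,z)+u_i$ on $\mathbb H\times\mathbb C^n$ for $1\le i\le 2n+1$, and let $H_M$ be the group generated by $g_1,\dots,g_{2n+1}$. *)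

theory Defs
  imports "HOL-Analysis.Analysis"
begin

definition cmat :: "int^'m^'m \<Rightarrow> complex^'m^'m" where
  "cmat M = (\<chi> i j. of_int (M $ i $ j))"

definition rmat :: "int^'m^'m \<Rightarrow> real^'m^'m" where
  "rmat M = (\<chi> i j. of_int (M $ i $ j))"

definition is_eigenvalue :: "complex^'m^'m \<Rightarrow> complex \<Rightarrow> bool" where
  "is_eigenvalue A l \<longleftrightarrow> (\<exists>v. v \<noteq> 0 \<and> A *v v = l *s v)"

definition gen_eigenspace :: "complex^'m^'m \<Rightarrow> complex \<Rightarrow> (complex^'m) set" where
  "gen_eigenspace A l = {v. \<exists>k. ((\<lambda>x. A *v x - l *s x) ^^ k) v = 0}"

(* holomorphic function of several complex variables on an open set U of C x C^n:
   complex (Frechet) differentiable at every point of U *)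
definition holo_several :: "(complex \<times> (complex^'n) \<Rightarrow> complex) \<Rightarrow> (complex \<times> (complex^'n)) set \<Rightarrow> bool" where
  "holo_several f U \<longleftrightarrow> open U \<and> (\<forall>p\<in>U. \<exists>f'. (f has_derivative f') (at p) \<and>
      (\<forall>c w z. f' (c * w, c *s z) = c * f' (w, z)))"

definition HxC :: "(complex \<times> (complex^'n)) set" where
  "HxC = {p. Im (fst p) > 0}"

inductive_set gen_group :: "('a \<Rightarrow> 'a) set \<Rightarrow> ('a \<Rightarrow> 'a) set" for S where
  gg_id: "id \<in> gen_group S"
| gg_gen: "g \<in> gen_group S \<Longrightarrow> s \<in> S \<Longrightarrow> s \<circ> g \<in> gen_group S"
| gg_inv: "g \<in> gen_group S \<Longrightarrow> s \<in> S \<Longrightarrow> inv s \<circ> g \<in> gen_group S"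

definition gmap :: "real^'m \<Rightarrow> ('n \<Rightarrow> complex^'m) \<Rightarrow> 'm \<Rightarrow> complex \<times> (complex^'n) \<Rightarrow> complex \<times> (complex^'n)" where
  "gmap a b i = (\<lambda>(w, z). (w + of_real (a $ i), z + (\<chi> j. b j $ i)))"

definition H_M :: "real^'m \<Rightarrow> ('n \<Rightarrow> complex^'m) \<Rightarrow> (complex \<times> (complex^'n) \<Rightarrow> complex \<times> (complex^'n)) set" where
  "H_M a b = gen_group (range (gmap a b))"

end

theory Submission
  imports Defs "HOL-Complex_Analysis.Cauchy_Integral_Formula"
begin

(* The vectors a, b_j and their conjugates lie in generalized eigenspaces for pairwise disjoint
   sets of eigenvalues, so they form a basis of C^(2n+1). Hence the real linear map
   x \<mapsto> (x \<cdot> a, (x \<cdot> b_j)_j) is an isomorphism of R^(2n+1) onto R \<times> C^n, and H_M contains the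
   translations by the image of Z^(2n+1), a full lattice. An invariant f is therefore bounded on
   every slice {w} \<times> C^n, hence independent of z by Liouville's theorem. Finally, iterating whichever
   of M, M^-1 contracts the eigenline of a on integer vectors x produces arbitrarily small nonzero
   real periods x \<cdot> a of w \<mapsto> f (w, 0), so its derivative vanishes. *)

definition eig_shift :: "'a::field^'m^'m \<Rightarrow> 'a \<Rightarrow> 'a^'m \<Rightarrow> 'a^'m" where
  "eig_shift A l v = A *v v - l *s v"

fun eig_shifts :: "'a::field^'m^'m \<Rightarrow> 'a list \<Rightarrow> 'a^'m \<Rightarrow> 'a^'m" where
  "eig_shifts A [] v = v"
| "eig_shifts A (l # ls) v = eig_shift A l (eig_shifts A ls v)"

lemma eig_shift_add: "eig_shift A l (u + v) = eig_shift A l u + eig_shift A l v"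
  by (simp add: eig_shift_def matrix_vector_right_distrib vec_eq_iff algebra_simps)

lemma eig_shift_scale: "eig_shift A l (c *s v) = c *s eig_shift A l v"
  by (simp add: eig_shift_def vec_eq_iff matrix_vector_mult_def sum_distrib_left algebra_simps)

lemma eig_shift_commute: "eig_shift A l (eig_shift A m v) = eig_shift A m (eig_shift A l v)"
  by (simp add: eig_shift_def vec_eq_iff matrix_vector_mult_def sum_subtractf
      sum_distrib_left algebra_simps)

lemma eig_shifts_add: "eig_shifts A ls (u + v) = eig_shifts A ls u + eig_shifts A ls v"
  by (induct ls) (auto simp: eig_shift_add)

lemma eig_shifts_scale: "eig_shifts A ls (c *s v) = c *s eig_shifts A ls v"
  by (induct ls) (auto simp: eig_shift_scale)

lemma eig_shifts_zero [simp]: "eig_shifts A ls 0 = 0"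
  using eig_shifts_scale[of A ls 0 0] by simp

lemma eig_shifts_append: "eig_shifts A (xs @ ys) v = eig_shifts A xs (eig_shifts A ys v)"
  by (induct xs) auto

lemma eig_shifts_commute: "eig_shifts A xs (eig_shifts A ys v) = eig_shifts A ys (eig_shifts A xs v)"
proof -
  have "eig_shift A l (eig_shifts A ys v) = eig_shifts A ys (eig_shift A l v)" for l v
    by (induct ys) (auto simp: eig_shift_commute)
  then show ?thesis by (induct xs arbitrary: v) auto
qed

lemma funpow_eq_eig_shifts: "((\<lambda>x. A *v x - l *s x) ^^ k) v = eig_shifts A (replicate k l) v"
  by (induct k) (auto simp: eig_shift_def)

lemma eig_shifts_eigenvector:
  assumes "eig_shift A \<mu> u = 0"
  shows "eig_shifts A ls u = (\<Prod>l\<leftarrow>ls. \<mu> - l) *s u"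
proof (induct ls)
  case (Cons l ls)
  have "eig_shifts A (l # ls) u = (\<Prod>l\<leftarrow>ls. \<mu> - l) *s eig_shift A l u"
    by (simp add: Cons eig_shift_scale)
  also have "eig_shift A l u = (\<mu> - l) *s u"
    using assms by (simp add: eig_shift_def vec_eq_iff algebra_simps)
  finally show ?case by (simp add: vec_eq_iff algebra_simps)
qed simp

lemma eig_shifts_coprime_eq_0:
  assumes "set xs \<inter> set ys = {}" "eig_shifts A xs v = 0" "eig_shifts A ys v = 0"
  shows "v = 0"
  using assms
proof (induct xs arbitrary: v)
  case (Cons l xs)
  let ?u = "eig_shifts A xs v"
  have "eig_shifts A ys ?u = 0"
    using Cons.prems(3) by (simp add: eig_shifts_commute[of A xs ys v, symmetric])
  moreover have "eig_shift A l ?u = 0" "(\<Prod>k\<leftarrow>ys. l - k) \<noteq> 0"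
    using Cons.prems by (auto simp: prod_list_zero_iff)
  ultimately have "?u = 0"
    using eig_shifts_eigenvector[of A l ?u ys] by (simp add: vec_eq_iff)
  with Cons show ?case by auto
qed simp

text \<open>The sum of the generalized eigenspaces of \<open>A\<close> for the eigenvalues in \<open>S\<close>, as the vectors
  annihilated by some product of factors \<open>A - l\<close> with \<open>l \<in> S\<close>.\<close>

definition root_space :: "'a::field^'m^'m \<Rightarrow> 'a set \<Rightarrow> ('a^'m) set" where
  "root_space A S = {v. \<exists>ls. set ls \<subseteq> S \<and> eig_shifts A ls v = 0}"

lemma subspace_root_space: "vec.subspace (root_space A S)"
  unfolding vec.subspace_def root_space_def
proof (intro conjI allI ballI)
  show "0 \<in> {v. \<exists>ls. set ls \<subseteq> S \<and> eig_shifts A ls v = 0}"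
    by (auto intro: exI[of _ "[]"])
  fix c u v assume "u \<in> {v. \<exists>ls. set ls \<subseteq> S \<and> eig_shifts A ls v = 0}"
    and "v \<in> {v. \<exists>ls. set ls \<subseteq> S \<and> eig_shifts A ls v = 0}"
  then obtain xs ys where "set xs \<subseteq> S" "eig_shifts A xs u = 0" "set ys \<subseteq> S" "eig_shifts A ys v = 0"
    by auto
  then show "c *s u \<in> {v. \<exists>ls. set ls \<subseteq> S \<and> eig_shifts A ls v = 0}"
    and "u + v \<in> {v. \<exists>ls. set ls \<subseteq> S \<and> eig_shifts A ls v = 0}"
    by (auto simp: eig_shifts_scale eig_shifts_add eig_shifts_append eig_shifts_commute[of A xs ys]
        intro!: exI[of _ "xs @ ys"])
qed

lemma gen_eigenspace_subset_root_space: "l \<in> S \<Longrightarrow> gen_eigenspace A l \<subseteq> root_space A S"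
proof
  fix v assume "l \<in> S" "v \<in> gen_eigenspace A l"
  moreover obtain k where "eig_shifts A (replicate k l) v = 0"
    using \<open>v \<in> gen_eigenspace A l\<close> by (auto simp: gen_eigenspace_def funpow_eq_eig_shifts)
  ultimately show "v \<in> root_space A S"
    unfolding root_space_def by (intro CollectI exI[of _ "replicate k l"]) auto
qed

lemma root_space_mono: "S \<subseteq> S' \<Longrightarrow> root_space A S \<subseteq> root_space A S'"
  by (auto simp: root_space_def)

lemma root_space_disjoint:
  "S \<inter> S' = {} \<Longrightarrow> v \<in> root_space A S \<Longrightarrow> v \<in> root_space A S' \<Longrightarrow> v = 0"
  unfolding root_space_def using eig_shifts_coprime_eq_0 by blast

lemma span_subset_root_space: "X \<subseteq> root_space A S \<Longrightarrow> vec.span X \<subseteq> root_space A S"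
  by (rule vec.span_minimal[OF _ subspace_root_space])

lemma span_gen_eigenspaces_subset_root_space:
  "B \<subseteq> S \<Longrightarrow> vec.span (\<Union>\<beta>\<in>B. gen_eigenspace A \<beta>) \<subseteq> root_space A S"
  by (intro span_subset_root_space UN_least gen_eigenspace_subset_root_space) auto

definition vec_cnj :: "complex^'m \<Rightarrow> complex^'m" where
  "vec_cnj v = (\<chi> i. cnj (v $ i))"

lemma vec_cnj_vec_cnj [simp]: "vec_cnj (vec_cnj v) = v"
  by (simp add: vec_cnj_def vec_eq_iff)

lemma inj_vec_cnj: "inj vec_cnj"
  by (metis vec_cnj_vec_cnj injI)

lemma vec_cnj_zero [simp]: "vec_cnj 0 = 0"
  and vec_cnj_scale: "vec_cnj (c *s v) = cnj c *s vec_cnj v"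
  and vec_cnj_sum: "vec_cnj (sum g F) = (\<Sum>x\<in>F. vec_cnj (g x))"
  by (simp_all add: vec_cnj_def vec_eq_iff sum_component)

lemma vec_cnj_eig_shifts:
  "vec_cnj (eig_shifts (cmat M) ls v) = eig_shifts (cmat M) (map cnj ls) (vec_cnj v)"
proof (induct ls)
  case (Cons l ls)
  have "vec_cnj (eig_shift (cmat M) l u) = eig_shift (cmat M) (cnj l) (vec_cnj u)" for u
    by (simp add: vec_cnj_def eig_shift_def vec_eq_iff matrix_vector_mult_def cmat_def)
  with Cons show ?case by simp
qed simp

lemma vec_cnj_root_space:
  "v \<in> root_space (cmat M) S \<Longrightarrow> vec_cnj v \<in> root_space (cmat M) (cnj ` S)"
proof -
  assume "v \<in> root_space (cmat M) S"
  then obtain ls where "set ls \<subseteq> S" "eig_shifts (cmat M) ls v = 0"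
    by (auto simp: root_space_def)
  then show "vec_cnj v \<in> root_space (cmat M) (cnj ` S)"
    unfolding root_space_def
    by (intro CollectI exI[of _ "map cnj ls"]) (auto simp: vec_cnj_eig_shifts[symmetric])
qed

lemma independent_vec_cnj:
  assumes "vec.independent X"
  shows "vec.independent (vec_cnj ` X)"
proof -
  have fin: "finite X" using assms vec.independent_explicit by blast
  show ?thesis unfolding vec.independent_explicit
  proof (intro conjI allI impI ballI)
    fix c v assume sum0: "(\<Sum>v\<in>vec_cnj ` X. c v *s v) = 0" and v: "v \<in> vec_cnj ` X"
    have "(\<Sum>x\<in>X. cnj (c (vec_cnj x)) *s x) = vec_cnj (\<Sum>x\<in>X. c (vec_cnj x) *s vec_cnj x)"
      by (simp add: vec_cnj_sum vec_cnj_scale)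
    also have "\<dots> = 0"
      using sum0 by (subst (asm) sum.reindex) (auto intro: inj_on_subset[OF inj_vec_cnj])
    finally have "\<forall>x\<in>X. cnj (c (vec_cnj x)) = 0"
      using assms[unfolded vec.independent_explicit]
      by (auto dest!: spec[of _ "\<lambda>x. cnj (c (vec_cnj x))"])
    then show "c v = 0" using v by auto
  qed (use fin in simp)
qed

lemma independent_Un_if_span_Int_trivial:
  assumes "vec.independent (S :: ('a::field^'m) set)" "vec.independent T"
    and "\<And>v. v \<in> vec.span S \<Longrightarrow> v \<in> vec.span T \<Longrightarrow> v = 0"
  shows "vec.independent (S \<union> T)" "S \<inter> T = {}"
proof -
  show disj: "S \<inter> T = {}"
    using assms vec.span_base vec.dependent_zero by blast
  have fS: "finite S" and fT: "finite T" using assms vec.independent_explicit by blast+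
  show "vec.independent (S \<union> T)" unfolding vec.independent_explicit
  proof (intro conjI allI impI ballI)
    fix c v assume sum0: "(\<Sum>v\<in>S \<union> T. c v *s v) = 0" and v: "v \<in> S \<union> T"
    define s where "s = (\<Sum>v\<in>S. c v *s v)"
    have s_T: "s = - (\<Sum>v\<in>T. c v *s v)"
      using sum0 disj fS fT by (simp add: s_def sum.union_disjoint eq_neg_iff_add_eq_0)
    have "s \<in> vec.span S"
      unfolding s_def by (simp add: vec.span_base vec.span_scale vec.span_sum)
    moreover have "- s \<in> vec.span T"
      unfolding s_T by (simp add: vec.span_base vec.span_scale vec.span_sum)
    ultimately have "s = 0" using assms(3) vec.span_neg[of "- s" T] by auto
    then have "(\<Sum>v\<in>S. c v *s v) = 0" "(\<Sum>v\<in>T. c v *s v) = 0"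
      using s_T by (simp_all add: s_def)
    then show "c v = 0" using v assms(1,2) fS fT vec.independent_explicit by blast
  qed (use fS fT in simp)
qed

lemma independent_Un_root_spaces:
  assumes "vec.independent X" "vec.independent Y"
    and "X \<subseteq> root_space A S" "Y \<subseteq> root_space A S'" "S \<inter> S' = {}"
  shows "vec.independent (X \<union> Y)" "X \<inter> Y = {}"
proof -
  have "v = 0" if "v \<in> vec.span X" "v \<in> vec.span Y" for v
    using that root_space_disjoint[OF assms(5)] span_subset_root_space[OF assms(3)]
      span_subset_root_space[OF assms(4)] by blast
  then show "vec.independent (X \<union> Y)" "X \<inter> Y = {}"
    using independent_Un_if_span_Int_trivial[OF assms(1,2)] by blast+
qed

text \<open>The three families lie in the root spaces for \<open>{\<alpha>}\<close>, the upper and the lower half plane,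
  so together they are independent, and they have \<open>2n + 1\<close> members.\<close>

lemma span_eigenvector_basis_conj_UNIV:
  fixes v :: "complex^'m" and b :: "'n::finite \<Rightarrow> complex^'m"
  assumes dim: "CARD('m) = 2 * CARD('n) + 1"
    and v: "v \<in> root_space (cmat M) {\<alpha>}" "Im \<alpha> = 0" "v \<noteq> 0"
    and b: "range b \<subseteq> root_space (cmat M) {l. Im l > 0}" "vec.independent (range b)" "inj b"
  shows "vec.span (insert v (range b \<union> vec_cnj ` range b)) = UNIV"
proof -
  let ?P = "range b" and ?Q = "vec_cnj ` range b" and ?R = "root_space (cmat M)"
  have "?Q \<subseteq> ?R (cnj ` {l. Im l > 0})"
    using b(1) vec_cnj_root_space by blast
  also have "\<dots> \<subseteq> ?R {l. Im l < 0}"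
    by (rule root_space_mono) auto
  finally have Q: "?Q \<subseteq> ?R {l. Im l < 0}" .
  have "{l. Im l > 0} \<inter> {l. Im l < 0} = {}" by auto
  note PQ = independent_Un_root_spaces[OF b(2) independent_vec_cnj[OF b(2)] b(1) Q this]
  have "?R {l. Im l > 0} \<subseteq> ?R {l. Im l \<noteq> 0}" "?R {l. Im l < 0} \<subseteq> ?R {l. Im l \<noteq> 0}"
    by (rule root_space_mono; auto)+
  then have PQ_R: "?P \<union> ?Q \<subseteq> ?R {l. Im l \<noteq> 0}"
    using b(1) Q by blast
  have "vec.independent {v}" "{v} \<subseteq> ?R {\<alpha>}" "{\<alpha>} \<inter> {l. Im l \<noteq> 0} = {}"
    using v by (simp_all add: vec.independent_insert)
  note vPQ = independent_Un_root_spaces[OF this(1) PQ(1) this(2) PQ_R this(3)]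
  have "card ?P = CARD('n)"
    using b(3) by (simp add: card_image)
  moreover have "card ?Q = card ?P"
    by (intro card_image inj_on_subset[OF inj_vec_cnj]) simp
  ultimately have "card ({v} \<union> (?P \<union> ?Q)) = CARD('m)"
    using vPQ(2) PQ(2) dim by (simp add: card_Un_disjoint)
  then have "UNIV \<subseteq> vec.span ({v} \<union> (?P \<union> ?Q))"
    using vec.card_ge_dim_independent[OF _ vPQ(1), of UNIV] vec_dim_card[where 'a=complex and 'n='m]
    by simp
  then show ?thesis by auto
qed

lemma rmat_eigenvector_in_root_space:
  assumes "rmat M *v a = \<alpha> *s a"
  shows "(\<chi> i. complex_of_real (a$i)) \<in> root_space (cmat M) {complex_of_real \<alpha>}"
proof -
  have "(\<Sum>j\<in>UNIV. real_of_int (M$i$j) * a$j) = \<alpha> * a$i" for i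
    using assms by (simp add: rmat_def matrix_vector_mult_def vec_eq_iff)
  moreover have "(\<Sum>j\<in>UNIV. complex_of_int (M$i$j) * complex_of_real (a$j))
      = complex_of_real (\<Sum>j\<in>UNIV. real_of_int (M$i$j) * a$j)" for i
    by (simp add: of_real_sum)
  ultimately have "(\<Sum>j\<in>UNIV. complex_of_int (M$i$j) * complex_of_real (a$j)) = complex_of_real (\<alpha> * a$i)"
    for i by simp
  then have "cmat M *v (\<chi> i. complex_of_real (a$i)) = complex_of_real \<alpha> *s (\<chi> i. complex_of_real (a$i))"
    by (simp add: cmat_def matrix_vector_mult_def vec_eq_iff)
  then show ?thesis
    unfolding root_space_def
    by (intro CollectI exI[of _ "[complex_of_real \<alpha>]"]) (simp add: eig_shift_def)
qed

text \<open>The translation part of \<open>g\<^sub>i\<close> is the value of this map at the \<open>i\<close>-th unit vector.\<close>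

definition lattice_map :: "real^'m \<Rightarrow> ('n \<Rightarrow> complex^'m) \<Rightarrow> real^'m \<Rightarrow> real \<times> (complex^'n)" where
  "lattice_map a b x = ((\<Sum>i\<in>UNIV. x$i * a$i), (\<chi> j. \<Sum>i\<in>UNIV. of_real (x$i) * b j $ i))"

lemma linear_lattice_map: "linear (lattice_map a b)"
proof (rule linearI)
  fix x y show "lattice_map a b (x + y) = lattice_map a b x + lattice_map a b y"
    by (simp add: lattice_map_def vec_eq_iff sum.distrib algebra_simps)
next
  fix r :: real and x show "lattice_map a b (r *\<^sub>R x) = r *\<^sub>R lattice_map a b x"
    by (simp add: lattice_map_def vec_eq_iff sum_distrib_left scaleR_sum_right)
      (simp add: scaleR_conv_of_real algebra_simps)
qed

lemma lattice_map_axis: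
  fixes a :: "real^'m" and b :: "'n::finite \<Rightarrow> complex^'m"
  shows "lattice_map a b (axis i 1) = (a$i, \<chi> j. b j $ i)"
proof -
  have "(\<Sum>k\<in>UNIV. of_real (axis i 1 $ k) * c k) = c i" for c :: "'m \<Rightarrow> 'r::real_algebra_1"
    by (simp add: axis_def if_distrib[of "\<lambda>x. of_real x * _"] cong: if_cong)
  from this[of "\<lambda>k. a $ k"] this[of "\<lambda>k. b _ $ k"] show ?thesis
    by (simp add: lattice_map_def)
qed

lemma inj_lattice_map:
  fixes a :: "real^'m" and b :: "'n::finite \<Rightarrow> complex^'m"
  assumes span: "vec.span (insert (\<chi> i. of_real (a$i)) (range b \<union> vec_cnj ` range b)) = UNIV"
  shows "inj (lattice_map a b)"
  unfolding linear_injective_0[OF linear_lattice_map]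
proof (intro allI impI)
  fix x assume "lattice_map a b x = 0"
  then have xa: "(\<Sum>i\<in>UNIV. x$i * a$i) = 0" and xb: "\<And>j. (\<Sum>i\<in>UNIV. of_real (x$i) * b j $ i) = 0"
    by (auto simp: lattice_map_def vec_eq_iff zero_prod_def)
  define K where "K = {v::complex^'m. (\<Sum>i\<in>UNIV. of_real (x$i) * v $ i) = 0}"
  have "vec.subspace K"
    by (auto simp: vec.subspace_def K_def algebra_simps sum.distrib sum_distrib_left[symmetric])
  moreover have "(\<chi> i. of_real (a$i)) \<in> K"
    using arg_cong[OF xa, of complex_of_real] by (simp add: K_def)
  moreover have "range b \<subseteq> K" using xb by (auto simp: K_def)
  moreover have "vec_cnj (b j) \<in> K" for j
    using arg_cong[OF xb[of j], of cnj] by (simp add: K_def vec_cnj_def)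
  ultimately have "UNIV \<subseteq> K"
    using span vec.span_minimal[of "insert (\<chi> i. of_real (a$i)) (range b \<union> vec_cnj ` range b)" K]
    by blast
  then have "axis k 1 \<in> K" for k by blast
  then show "x = 0" by (simp add: K_def vec_eq_iff axis_def if_distrib cong: if_cong)
qed

lemma surj_lattice_map:
  fixes a :: "real^'m" and b :: "'n::finite \<Rightarrow> complex^'m"
  assumes "inj (lattice_map a b)" "CARD('m) = 2 * CARD('n) + 1"
  shows "surj (lattice_map a b)"
proof -
  have "dim (UNIV :: (real \<times> (complex^'n)) set) = dim (UNIV :: (real^'m) set)"
    using assms(2) by (simp add: DIM_cart DIM_prod)
  then show ?thesis
    using linear_injective_imp_surjective[OF linear_lattice_map assms(1)] by metis
qed

definition transl :: "real \<times> (complex^'n) \<Rightarrow> complex \<times> (complex^'n) \<Rightarrow> complex \<times> (complex^'n)" where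
  "transl t p = (fst p + of_real (fst t), snd p + snd t)"

lemma transl_0: "transl 0 = id"
  by (simp add: transl_def fun_eq_iff)

lemma transl_comp: "transl s \<circ> transl t = transl (s + t)"
  by (simp add: transl_def fun_eq_iff algebra_simps)

lemma inv_transl: "inv (transl t) = transl (- t)"
  by (rule inv_unique_comp) (simp_all add: transl_comp transl_0)

lemma gmap_eq_transl: "gmap a b i = transl (lattice_map a b (axis i 1))"
  by (simp add: gmap_def transl_def lattice_map_axis fun_eq_iff)

lemma transl_lattice_in_H_M:
  assumes "\<And>i. y $ i \<in> \<int>"
  shows "transl (lattice_map a b y) \<in> H_M a b"
proof -
  let ?e = "\<lambda>i. lattice_map a b (axis i 1)"
  have step: "transl (t + of_int c *\<^sub>R ?e i) \<in> H_M a b" if t: "transl t \<in> H_M a b" for t c i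
  proof (induct c rule: int_induct[where k=0])
    case (step1 c)
    then have "gmap a b i \<circ> transl (t + of_int c *\<^sub>R ?e i) \<in> H_M a b"
      unfolding H_M_def by (intro gg_gen) auto
    then show ?case by (simp add: gmap_eq_transl transl_comp algebra_simps)
  next
    case (step2 c)
    then have "inv (gmap a b i) \<circ> transl (t + of_int c *\<^sub>R ?e i) \<in> H_M a b"
      unfolding H_M_def by (intro gg_inv) auto
    then show ?case by (simp add: gmap_eq_transl transl_comp inv_transl algebra_simps)
  qed (simp add: t)
  have "transl (\<Sum>i\<in>F. y $ i *\<^sub>R ?e i) \<in> H_M a b" if "finite F" for F
    using that
  proof (induct F rule: finite_induct)
    case empty
    then show ?case unfolding sum.empty transl_0 H_M_def by (rule gg_id)
  next
    case (insert i F)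
    obtain c where "y $ i = of_int c" using assms[of i] Ints_cases by metis
    then show ?case using step[OF insert(3), of c i] insert(1,2) by (simp add: add.commute)
  qed
  moreover have "lattice_map a b y = lattice_map a b (\<Sum>i\<in>UNIV. y $ i *\<^sub>R axis i 1)"
    using basis_expansion[of y] by (simp add: scalar_mult_eq_scaleR)
  then have "lattice_map a b y = (\<Sum>i\<in>UNIV. y $ i *\<^sub>R ?e i)"
    using linear_lattice_map[of a b] by (simp add: linear_sum linear_scale)
  ultimately show ?thesis by simp
qed

lemma det_rmat: "det (rmat M) = (of_int (det M) :: real)"
  by (simp add: det_def rmat_def of_int_sum of_int_prod)

text \<open>Cramer's rule: the entries of the inverse of a unimodular integer matrix are determinants
  of integer matrices.\<close>

lemma rmat_inverse_integer:
  fixes M :: "int^'m^'m"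
  assumes "det M = 1"
  obtains R :: "real^'m^'m" where "R ** rmat M = mat 1" "\<And>i j. R $ i $ j \<in> \<int>"
proof -
  have "invertible (rmat M)" using assms by (simp add: invertible_det_nz det_rmat)
  then obtain R where R: "rmat M ** R = mat 1" "R ** rmat M = mat 1"
    unfolding invertible_def by blast
  have R_int: "R $ k $ j \<in> \<int>" for k j
  proof -
    let ?x = "R *v axis j 1"
    let ?N = "(\<chi> i l. if l = k then (if i = j then 1 else 0) else M$i$l) :: int^'m^'m"
    have "rmat M *v ?x = axis j 1" by (simp add: matrix_vector_mul_assoc R(1))
    then have "(\<chi> i l. if l = k then (rmat M *v ?x)$i else rmat M$i$l) = rmat ?N"
      by (simp add: rmat_def vec_eq_iff axis_def)
    then have "?x $ k = of_int (det ?N)"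
      using cramer_lemma[where A="rmat M" and k=k and x="?x"] det_rmat[of M] det_rmat[of ?N] assms by simp
    moreover have "?x $ k = R $ k $ j" by (simp add: matrix_vector_mult_basis column_def)
    ultimately show ?thesis by simp
  qed
  show ?thesis using R(2) R_int by (rule that)
qed

text \<open>Whichever of \<open>M\<close>, \<open>M\<^sup>-\<^sup>1\<close> contracts the eigenline of \<open>a\<close>.\<close>

lemma integer_contraction:
  fixes M :: "int^'m^'m"
  assumes "det M = 1" "rmat M *v a = \<alpha> *s a" "\<alpha> > 0" "\<alpha> \<noteq> 1"
  obtains A :: "real^'m^'m" and \<gamma> where "\<And>i j. A$i$j \<in> \<int>" "A *v a = \<gamma> *s a" "0 < \<gamma>" "\<gamma> < 1"
proof (cases "\<alpha> < 1")
  case True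
  show ?thesis
  proof (rule that)
    show "rmat M $ i $ j \<in> \<int>" for i j by (simp add: rmat_def)
  qed (use True assms in simp_all)
next
  case False
  obtain R where R: "R ** rmat M = mat 1" "\<And>i j. R $ i $ j \<in> \<int>"
    using rmat_inverse_integer[OF assms(1)] by blast
  have "R *v (rmat M *v a) = a" by (simp add: matrix_vector_mul_assoc R(1))
  then have "\<alpha> *s (R *v a) = a" using assms(2) by (simp add: vec.scale)
  then have "R *v a = (1/\<alpha>) *s a" using assms(3) by (auto simp: vec_eq_iff field_simps)
  moreover have "0 < 1/\<alpha>" "1/\<alpha> < 1" using False assms(3,4) by simp_all
  ultimately show ?thesis by (rule that[OF R(2)])
qed

text \<open>Iterating the transpose of the contraction on a unit vector gives integer vectors whose
  pairings with \<open>a\<close> form a nonzero geometric sequence.\<close>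

lemma integer_vectors_small_pairing:
  fixes A :: "real^'m^'m"
  assumes "\<And>i j. A$i$j \<in> \<int>" "A *v a = \<gamma> *s a" "0 < \<gamma>" "\<gamma> < 1" "a \<noteq> 0"
  obtains y where "\<And>N i. y N $ i \<in> \<int>" "\<And>N. (\<Sum>i\<in>UNIV. y N $ i * a$i) \<noteq> 0"
    "(\<lambda>N. \<Sum>i\<in>UNIV. y N $ i * a$i) \<longlonglongrightarrow> 0"
proof -
  obtain i0 where i0: "a $ i0 \<noteq> 0" using assms(5) by (auto simp: vec_eq_iff)
  define y where "y N = ((\<lambda>v. transpose A *v v) ^^ N) (axis i0 1)" for N
  have y_Suc: "y (Suc N) = transpose A *v y N" for N by (simp add: y_def)
  have pairing_transpose: "(\<Sum>i\<in>UNIV. (transpose A *v v) $ i * a$i) = \<gamma> * (\<Sum>i\<in>UNIV. v $ i * a$i)" for v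
  proof -
    have "(\<Sum>i\<in>UNIV. (transpose A *v v) $ i * a$i) = (\<Sum>i\<in>UNIV. \<Sum>j\<in>UNIV. A$j$i * v$j * a$i)"
      by (simp add: matrix_vector_mult_def transpose_def sum_distrib_right)
    also have "\<dots> = (\<Sum>j\<in>UNIV. v$j * (A *v a)$j)"
      by (subst sum.swap) (simp add: matrix_vector_mult_def sum_distrib_left algebra_simps)
    also have "\<dots> = \<gamma> * (\<Sum>i\<in>UNIV. v $ i * a$i)"
      using assms(2) by (simp add: sum_distrib_left algebra_simps)
    finally show ?thesis .
  qed
  have y_int: "\<forall>i. y N $ i \<in> \<int>" for N
  proof (induct N)
    case 0 then show ?case by (simp add: y_def axis_def)
  next
    case (Suc N) then show ?case
      using assms(1) unfolding y_Suc
      by (auto simp: matrix_vector_mult_def transpose_def intro!: Ints_sum Ints_mult)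
  qed
  have y_pairing: "(\<Sum>i\<in>UNIV. y N $ i * a$i) = \<gamma>^N * a$i0" for N
  proof (induct N)
    case 0
    have "(\<Sum>i\<in>UNIV. axis i0 1 $ i * a$i) = (\<Sum>i\<in>UNIV. if i = i0 then a $ i else 0)"
      by (intro sum.cong) (auto simp: axis_def)
    then show ?case by (simp add: y_def)
  next
    case (Suc N) then show ?case unfolding y_Suc pairing_transpose by simp
  qed
  have "(\<lambda>N. \<gamma>^N * a$i0) \<longlonglongrightarrow> 0"
    using assms(3,4) by (intro tendsto_mult_left_zero LIMSEQ_power_zero) auto
  with y_int y_pairing i0 assms(3) show ?thesis by (intro that[of y]) simp_all
qed

lemma holo_several_continuous_on: "holo_several f U \<Longrightarrow> continuous_on U f"
  unfolding holo_several_def by (meson continuous_at_imp_continuous_on has_derivative_continuous)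

lemma holo_several_line_differentiable:
  fixes f :: "complex \<times> (complex^'n) \<Rightarrow> complex"
  assumes "holo_several f U" "(w0 + c * w1, z0 + c *s z1) \<in> U"
  shows "(\<lambda>c. f (w0 + c * w1, z0 + c *s z1)) field_differentiable (at c)"
proof -
  obtain f' where f': "(f has_derivative f') (at (w0 + c * w1, z0 + c *s z1))"
    and f'_cmult: "\<And>c w z. f' (c * w, c *s z) = c * f' (w, z)"
    using assms unfolding holo_several_def by blast
  have "linear (\<lambda>d::complex. (d * w1, d *s z1))"
    by (rule linearI) (auto simp: vec_eq_iff algebra_simps)
  then have "((\<lambda>d. (w0, z0) + (d * w1, d *s z1)) has_derivative (\<lambda>d. 0 + (d * w1, d *s z1))) (at c)"
    by (intro has_derivative_add has_derivative_const bounded_linear_imp_has_derivative)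
      (simp add: linear_conv_bounded_linear)
  then have "((\<lambda>d. (w0 + d * w1, z0 + d *s z1)) has_derivative (\<lambda>d. (d * w1, d *s z1))) (at c)"
    by simp
  from has_derivative_compose[OF this f']
  have "((\<lambda>d. f (w0 + d * w1, z0 + d *s z1)) has_derivative (\<lambda>d. f' (d * w1, d *s z1))) (at c)" .
  moreover have "(\<lambda>d. f' (d * w1, d *s z1)) = (*) (f' (w1, z1))"
    by (simp add: fun_eq_iff f'_cmult mult.commute)
  ultimately show ?thesis
    unfolding field_differentiable_def has_field_derivative_def by metis
qed

text \<open>Every value is attained on the compact image of the unit cube.\<close>

lemma bounded_range_if_lattice_periodic:
  fixes L :: "real^'m \<Rightarrow> 'v::real_normed_vector" and g :: "'v \<Rightarrow> 'b::real_normed_vector"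
  assumes "linear L" "surj L" "continuous_on UNIV g"
    and periodic: "\<And>v y. (\<And>i. y $ i \<in> \<int>) \<Longrightarrow> g (v + L y) = g v"
  shows "bounded (range g)"
proof -
  have "range g \<subseteq> g ` L ` cbox 0 1"
  proof
    fix u assume "u \<in> range g"
    then obtain x where u: "u = g (L x)" using assms(2) by (metis surjD rangeE)
    define y :: "real^'m" where "y = (\<chi> i. - of_int \<lfloor>x$i\<rfloor>)"
    have "x + y \<in> cbox 0 1"
      by (simp add: y_def mem_box_cart frac_def[symmetric] frac_ge_0 frac_lt_1 less_imp_le)
    moreover have "g (L (x + y)) = u"
      using periodic[of y "L x"] linear_add[OF assms(1)] by (simp add: u y_def)
    ultimately show "u \<in> g ` L ` cbox 0 1" by blast
  qed
  moreover have "compact (g ` L ` cbox 0 1)"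
    using assms(1,3) by (intro compact_continuous_image continuous_on_subset[OF assms(3)]
        linear_continuous_on compact_cbox) (auto simp: linear_conv_bounded_linear)
  ultimately show ?thesis by (meson bounded_subset compact_imp_bounded)
qed

lemma has_field_derivative_eq_0_if_periods:
  fixes \<phi> :: "'a::real_normed_field \<Rightarrow> 'a"
  assumes "(\<phi> has_field_derivative D) (at w)"
    and "\<And>N. s N \<noteq> 0" "s \<longlonglongrightarrow> 0" "\<And>N. \<phi> (w + s N) = \<phi> w"
  shows "D = 0"
proof -
  have "(\<lambda>N. w + s N) \<longlonglongrightarrow> w"
    using tendsto_add[OF tendsto_const assms(3), of w] by simp
  then have "filterlim (\<lambda>N. w + s N) (at w) sequentially"
    using assms(2) by (simp add: filterlim_at)
  from filterlim_compose[OF assms(1)[unfolded has_field_derivative_iff] this]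
  have "(\<lambda>N. (\<phi> (w + s N) - \<phi> w) / (w + s N - w)) \<longlonglongrightarrow> D" by simp
  then show "D = 0" using assms(4) by (simp add: LIMSEQ_const_iff)
qed

text \<open>Boundedness on \<open>{w} \<times> \<complex>\<^sup>n\<close> and Liouville's theorem on the complex lines through
  \<open>(w, 0)\<close>.\<close>

lemma fibre_constant_if_lattice_invariant:
  fixes f :: "complex \<times> (complex^'n) \<Rightarrow> complex" and L :: "real^'m \<Rightarrow> real \<times> (complex^'n)"
  assumes holo: "holo_several f HxC" and "linear L" "surj L"
    and invariant: "\<And>y p. (\<And>i. y $ i \<in> \<int>) \<Longrightarrow> p \<in> HxC \<Longrightarrow> f (transl (L y) p) = f p"
    and w: "0 < Im w"
  shows "f (w, z) = f (w, 0)"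
proof -
  define g where "g q = f (w + of_real (fst q), snd q)" for q :: "real \<times> (complex^'n)"
  have "continuous_on UNIV g"
    unfolding g_def using w
    by (intro continuous_on_compose2[OF holo_several_continuous_on[OF holo]] continuous_intros)
      (auto simp: HxC_def)
  moreover have "g (q + L y) = g q" if "\<And>i. y $ i \<in> \<int>" for q y
    using invariant[OF that, of "(w + of_real (fst q), snd q)"] w
    by (simp add: g_def transl_def HxC_def algebra_simps)
  ultimately have "bounded (range g)"
    using bounded_range_if_lattice_periodic assms(2,3) by blast
  moreover have "range (\<lambda>c. f (w, c *s z)) \<subseteq> range g"
    by (auto simp: g_def intro!: image_eqI[of _ _ "(0, _ *s z)"])
  ultimately have "bounded (range (\<lambda>c. f (w, c *s z)))"
    by (rule bounded_subset)
  moreover have "(\<lambda>c. f (w, c *s z)) holomorphic_on UNIV"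
    using holo_several_line_differentiable[OF holo, of w _ 0 0 z] w
    by (simp add: holomorphic_on_def field_differentiable_at_within HxC_def)
  ultimately have "(\<lambda>c. f (w, c *s z)) constant_on UNIV"
    using Liouville_theorem by blast
  then have "f (w, 1 *s z) = f (w, 0 *s z)"
    unfolding constant_on_def by (metis UNIV_I)
  then show ?thesis by (simp add: vec_eq_iff)
qed

lemma constant_if_small_real_periods:
  fixes f :: "complex \<times> (complex^'n) \<Rightarrow> complex" and s :: "nat \<Rightarrow> real"
  assumes holo: "holo_several f HxC"
    and fibre: "\<And>w z. 0 < Im w \<Longrightarrow> f (w, z) = f (w, 0)"
    and periodic: "\<And>N w. 0 < Im w \<Longrightarrow> f (w + of_real (s N), 0) = f (w, 0)"
    and "\<And>N. s N \<noteq> 0" "s \<longlonglongrightarrow> 0"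
  shows "\<exists>c. \<forall>p\<in>HxC. f p = c"
proof -
  define \<phi> where "\<phi> w = f (w, 0)" for w
  have deriv_0: "(\<phi> has_field_derivative 0) (at w within {w. 0 < Im w})" if w: "0 < Im w" for w
  proof -
    have "(\<lambda>c. f (0 + c * 1, 0 + c *s 0)) field_differentiable (at w)"
      using holo_several_line_differentiable[OF holo, of 0 w 1 0 0] w by (simp add: HxC_def)
    then have "\<phi> field_differentiable (at w)"
      by (simp add: \<phi>_def[abs_def])
    then obtain D where D: "(\<phi> has_field_derivative D) (at w)"
      unfolding field_differentiable_def by blast
    have "D = 0"
    proof (rule has_field_derivative_eq_0_if_periods[OF D])
      show "complex_of_real (s N) \<noteq> 0" for N using assms(4) by simp
      show "(\<lambda>N. complex_of_real (s N)) \<longlonglongrightarrow> 0"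
        using tendsto_of_real[OF assms(5)] by simp
      show "\<phi> (w + complex_of_real (s N)) = \<phi> w" for N
        using periodic w by (simp add: \<phi>_def)
    qed
    with D show ?thesis by (simp add: has_field_derivative_at_within)
  qed
  have "\<exists>c. \<forall>w\<in>{w. 0 < Im w}. \<phi> w = c"
    by (rule has_field_derivative_zero_constant[OF convex_halfspace_Im_gt]) (use deriv_0 in blast)
  then obtain c where c: "\<And>w. 0 < Im w \<Longrightarrow> \<phi> w = c" by blast
  show ?thesis
  proof (intro exI ballI)
    fix p :: "complex \<times> (complex^'n)" assume "p \<in> HxC"
    then have "0 < Im (fst p)" by (simp add: HxC_def)
    then show "f p = c" using fibre[of "fst p" "snd p"] c[of "fst p"] by (simp add: \<phi>_def)
  qed
qed

theorem proposition4p1: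
  fixes M :: "int^'m^'m" and \<alpha> :: real and a :: "real^'m"
    and b :: "'n::finite \<Rightarrow> complex^'m" and W :: "(complex^'m) set"
    and f :: "complex \<times> (complex^'n) \<Rightarrow> complex"
  assumes dim: "CARD('m) = 2 * CARD('n) + 1"
    and det: "det M = 1"
    and alpha_eig: "is_eigenvalue (cmat M) (of_real \<alpha>)"
    and only_real: "\<And>l. is_eigenvalue (cmat M) l \<Longrightarrow> Im l = 0 \<Longrightarrow> l = of_real \<alpha>"
    and alpha_pos: "\<alpha> > 0" and alpha_ne1: "\<alpha> \<noteq> 1"
    and alpha_simple: "vec.dim (gen_eigenspace (cmat M) (of_real \<alpha>)) = 1"
    and W_def: "W = vec.span (\<Union>\<beta>\<in>{\<beta>. is_eigenvalue (cmat M) \<beta> \<and> Im \<beta> > 0}.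
                               gen_eigenspace (cmat M) \<beta>)"
    and a_eig: "a \<noteq> 0" "rmat M *v a = \<alpha> *s a"
    and b_basis: "inj b" "vec.independent (range b)" "vec.span (range b) = W"
    and holo: "holo_several f HxC"
    and inv: "\<And>g p. g \<in> H_M a b \<Longrightarrow> p \<in> HxC \<Longrightarrow> f (g p) = f p"
  shows "\<exists>c. \<forall>p\<in>HxC. f p = c"
proof -
  have "W \<subseteq> root_space (cmat M) {l. Im l > 0}"
    unfolding W_def by (rule span_gen_eigenspaces_subset_root_space) blast
  then have "range b \<subseteq> root_space (cmat M) {l. Im l > 0}"
    using b_basis(3) vec.span_base by blast
  moreover have "(\<chi> i. complex_of_real (a$i)) \<noteq> 0"
    using a_eig(1) by (simp add: vec_eq_iff)
  ultimately have "vec.span (insert (\<chi> i. of_real (a$i)) (range b \<union> vec_cnj ` range b)) = UNIV"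
    using span_eigenvector_basis_conj_UNIV[OF dim rmat_eigenvector_in_root_space[OF a_eig(2)]]
      b_basis(1,2) by simp
  then have surj: "surj (lattice_map a b)"
    using inj_lattice_map surj_lattice_map dim by blast
  have invariant: "f (transl (lattice_map a b y) p) = f p" if "\<And>i. y $ i \<in> \<int>" "p \<in> HxC" for y p
    using inv[OF transl_lattice_in_H_M] that by blast
  note fibre = fibre_constant_if_lattice_invariant[OF holo linear_lattice_map surj invariant]
  obtain A :: "real^'m^'m" and \<gamma> where A: "\<And>i j. A$i$j \<in> \<int>" "A *v a = \<gamma> *s a" "0 < \<gamma>" "\<gamma> < 1"
    using integer_contraction[OF det a_eig(2) alpha_pos alpha_ne1] by blast
  obtain y where y: "\<And>N i. y N $ i \<in> \<int>" "\<And>N. (\<Sum>i\<in>UNIV. y N $ i * a$i) \<noteq> 0"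
    "(\<lambda>N. \<Sum>i\<in>UNIV. y N $ i * a$i) \<longlonglongrightarrow> 0"
    using integer_vectors_small_pairing[OF A a_eig(1)] by blast
  show ?thesis
  proof (rule constant_if_small_real_periods[OF holo fibre _ y(2,3)])
    fix N and w :: complex assume w: "0 < Im w"
    let ?t = "lattice_map a b (y N)"
    have "f (w + of_real (\<Sum>i\<in>UNIV. y N $ i * a$i), 0) = f (transl ?t (w, 0))"
      using fibre[of _ "snd ?t"] w by (simp add: transl_def lattice_map_def)
    also have "\<dots> = f (w, 0)"
      using invariant[OF y(1)] w by (simp add: HxC_def)
    finally show "f (w + of_real (\<Sum>i\<in>UNIV. y N $ i * a$i), 0) = f (w, 0)" .
  qed
qed

end
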